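(* For all $\Gamma,\Delta\subseteq\mathcal{L}_{\Box\!\!\rightarrow}$: $(\Gamma,\Delta)\in\mathsf{N4CK}$ iff $(E^\pm(\Gamma),E^\pm(\Delta))\in\mathsf{IntCK}^{e+}$. That is, $E^\pm$ faithfully embeds $\mathsf{N4CK}$ into the extended positive intuitionistic conditional logic $\mathsf{IntCK}^{e+}$.
   Context: $\mathcal{L}_{\Box\!\!\rightarrow}$ is built from variables $p_0,p_1,\dots$ with $\wedge,\vee,\to$, strong negation $\sim$, and a binary would-conditional $\Box\!\!\rightarrow$. A Nelsonian conditional model is $(W,\leq,R,V^+,V^-)$ with $W\neq\emptyset$, $\leq$ a preorder, $V^\pm$ assigning upward-closed sets, $R\subseteq W\times(\mathcal{P}(W)\times\mathcal{P}(W))\times W$ satisfying for all $X,Y$: (c1) $w\leq w'$ and $R_{(X,Y)}(w,v)$ imply $R_{(X,Y)}(w',v')$ for some $v'\geq v$; (c2) $R_{(X,Y)}(w,v)$ and $v\leq v'$ imply $R_{(X,Y)}(w',v')$ for some $w'\geq w$. Verification $\models^+$/falsification $\models^-$: atoms by $V^\pm$; $\wedge$ verified iff both verified, falsified iff one falsified; $\vee$ dually; $\sim$ swaps; $w\models^+\psi\to\chi$ iff for all $v\geq w$, $v\models^+\psi$ implies $v\models^+\chi$; $w\models^-\psi\to\chi$ iff $w\models^+\psi$ and $w\models^-\chi$; $w\models^+\psi\Box\!\!\rightarrow\chi$ iff for all $v\geq w$ and $u$ with $R_{\|\psi\|}(v,u)$, $u\models^+\chi$; $w\models^-\psi\Box\!\!\rightarrow\chi$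 iff some $u$ has $R_{\|\psi\|}(w,u)$ and $u\models^-\chi$; $\|\psi\|=(\{w\mid w\models^+\psi\},\{w\mid w\models^-\psi\})$. $(\Gamma,\Delta)\in\mathsf{N4CK}$ iff no pointed such model verifies all of $\Gamma$ and none of $\Delta$. $\mathsf{IntCK}^{e+}$ is over the language with variables $p_i,q_i$, connectives $\wedge,\vee,\to$, primitive $\Box\!\!\rightarrow,\Diamond\!\!\rightarrow$ (no negation); its models are $(W,\leq,R,V)$ with $\leq$ a preorder, $V$ assigning upward-closed sets, $R\subseteq W\times\mathcal{P}(W)\times W$ such that for all $X$: if $w\leq w'$ and $R_X(w,v)$ then $R_X(w',v')$ for some $v'\geq v$; if $R_X(w,v)$ and $v\leq v'$ then $R_X(w',v')$ for some $w'\geq w$; satisfaction $\models^i$: intuitionistic for $\wedge,\vee,\to$; $w\models^i\psi\Box\!\!\rightarrow\chi$ iff for all $v\geq w$ and $u$ with $R_{\|\psi\|^i}(v,u)$, $u\models^i\chi$; $w\models^i\psi\Diamond\!\!\rightarrow\chi$ iff some $u$ has $R_{\|\psi\|^i}(w,u)$ and $u\models^i\chi$, where $\|\psi\|^i$ is the truth set; $(\Gamma,\Delta)\in\mathsf{IntCK}^{e+}$ iff no pointed model satisfies all of $\Gamma$ and none of $\Delta$. The translation $E^\pm$: $E^\pm(p_i)=p_i$, $E^\pm(\sim p_i)=q_i$, $E^\pm(\phi\wedge\psi)=E^\pm(\phi)\wedge E^\pm(\psi)$, $E^\pm(\sim(\phi\wedge\psi))=E^\pm(\sim\phi)\vee E^\pm(\sim\psi)$,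 $E^\pm(\phi\vee\psi)=E^\pm(\phi)\vee E^\pm(\psi)$, $E^\pm(\sim(\phi\vee\psi))=E^\pm(\sim\phi)\wedge E^\pm(\sim\psi)$, $E^\pm(\sim\sim\phi)=E^\pm(\phi)$, $E^\pm(\phi\to\psi)=E^\pm(\phi)\to E^\pm(\psi)$, $E^\pm(\sim(\phi\to\psi))=E^\pm(\phi)\wedge E^\pm(\sim\psi)$, $E^\pm(\phi\Box\!\!\rightarrow\psi)=E^\pm(\phi)\Box\!\!\rightarrow(E^\pm(\sim\phi)\Box\!\!\rightarrow E^\pm(\psi))$, $E^\pm(\sim(\phi\Box\!\!\rightarrow\psi))=E^\pm(\phi)\Diamond\!\!\rightarrow(E^\pm(\sim\phi)\Diamond\!\!\rightarrow E^\pm(\sim\psi))$. *)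

theory Defs
  imports Main
begin

datatype nform =
    NVar nat
  | NNeg nform
  | NAnd nform nform
  | NOr nform nform
  | NImp nform nform
  | NBox nform nform

datatype iform =
    IP nat
  | IQ nat
  | IAnd iform iform
  | IOr iform iform
  | IImp iform iform
  | IBox iform iform
  | IDia iform iform

text \<open>Etr phi is E(phi); Etrn phi is E(~phi).\<close>
fun Etr :: "nform \<Rightarrow> iform" and Etrn :: "nform \<Rightarrow> iform" where
  "Etr (NVar i) = IP i"
| "Etr (NNeg a) = Etrn a"
| "Etr (NAnd a b) = IAnd (Etr a) (Etr b)"
| "Etr (NOr a b) = IOr (Etr a) (Etr b)"
| "Etr (NImp a b) = IImp (Etr a) (Etr b)"
| "Etr (NBox a b) = IBox (Etr a) (IBox (Etrn a) (Etr b))"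
| "Etrn (NVar i) = IQ i"
| "Etrn (NNeg a) = Etr a"
| "Etrn (NAnd a b) = IOr (Etrn a) (Etrn b)"
| "Etrn (NOr a b) = IAnd (Etrn a) (Etrn b)"
| "Etrn (NImp a b) = IAnd (Etr a) (Etrn b)"
| "Etrn (NBox a b) = IDia (Etr a) (IDia (Etrn a) (Etrn b))"

text \<open>The set of worlds W is the (nonempty) universe of the type 'w.
  le is the preorder, R (X,Y) w v is R_{(X,Y)}(w,v).\<close>
definition n4_model ::
  "('w \<Rightarrow> 'w \<Rightarrow> bool) \<Rightarrow> ('w set \<times> 'w set \<Rightarrow> 'w \<Rightarrow> 'w \<Rightarrow> bool)
   \<Rightarrow> (nat \<Rightarrow> 'w set) \<Rightarrow> (nat \<Rightarrow> 'w set) \<Rightarrow> bool" where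
  "n4_model le R Vp Vn \<longleftrightarrow>
     (\<forall>w. le w w) \<and> (\<forall>u v w. le u v \<longrightarrow> le v w \<longrightarrow> le u w) \<and>
     (\<forall>i w w'. w \<in> Vp i \<longrightarrow> le w w' \<longrightarrow> w' \<in> Vp i) \<and>
     (\<forall>i w w'. w \<in> Vn i \<longrightarrow> le w w' \<longrightarrow> w' \<in> Vn i) \<and>
     (\<forall>X w w' v. le w w' \<longrightarrow> R X w v \<longrightarrow> (\<exists>v'. le v v' \<and> R X w' v')) \<and>
     (\<forall>X w v v'. R X w v \<longrightarrow> le v v' \<longrightarrow> (\<exists>w'. le w w' \<and> R X w' v'))"

text \<open>nsat ... True w phi is verification, nsat ... False w phi is falsification.\<close>
fun nsat ::
  "('w \<Rightarrow> 'w \<Rightarrow> bool) \<Rightarrow> ('w set \<times> 'w set \<Rightarrow> 'w \<Rightarrow> 'w \<Rightarrow> bool)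
   \<Rightarrow> (nat \<Rightarrow> 'w set) \<Rightarrow> (nat \<Rightarrow> 'w set) \<Rightarrow> bool \<Rightarrow> 'w \<Rightarrow> nform \<Rightarrow> bool" where
  "nsat le R Vp Vn True w (NVar i) = (w \<in> Vp i)"
| "nsat le R Vp Vn False w (NVar i) = (w \<in> Vn i)"
| "nsat le R Vp Vn True w (NNeg a) = nsat le R Vp Vn False w a"
| "nsat le R Vp Vn False w (NNeg a) = nsat le R Vp Vn True w a"
| "nsat le R Vp Vn True w (NAnd a b) = (nsat le R Vp Vn True w a \<and> nsat le R Vp Vn True w b)"
| "nsat le R Vp Vn False w (NAnd a b) = (nsat le R Vp Vn False w a \<or> nsat le R Vp Vn False w b)"
| "nsat le R Vp Vn True w (NOr a b) = (nsat le R Vp Vn True w a \<or> nsat le R Vp Vn True w b)"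
| "nsat le R Vp Vn False w (NOr a b) = (nsat le R Vp Vn False w a \<and> nsat le R Vp Vn False w b)"
| "nsat le R Vp Vn True w (NImp a b) =
     (\<forall>v. le w v \<longrightarrow> nsat le R Vp Vn True v a \<longrightarrow> nsat le R Vp Vn True v b)"
| "nsat le R Vp Vn False w (NImp a b) = (nsat le R Vp Vn True w a \<and> nsat le R Vp Vn False w b)"
| "nsat le R Vp Vn True w (NBox a b) =
     (\<forall>v u. le w v \<longrightarrow>
        R ({x. nsat le R Vp Vn True x a}, {x. nsat le R Vp Vn False x a}) v u \<longrightarrow>
        nsat le R Vp Vn True u b)"
| "nsat le R Vp Vn False w (NBox a b) =
     (\<exists>u. R ({x. nsat le R Vp Vn True x a}, {x. nsat le R Vp Vn False x a}) w u \<and>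
        nsat le R Vp Vn False u b)"

definition N4CK :: "'w itself \<Rightarrow> nform set \<Rightarrow> nform set \<Rightarrow> bool" where
  "N4CK _ \<Gamma> \<Delta> \<longleftrightarrow>
     \<not> (\<exists>(le :: 'w \<Rightarrow> 'w \<Rightarrow> bool) R Vp Vn w. n4_model le R Vp Vn \<and>
          (\<forall>\<phi>\<in>\<Gamma>. nsat le R Vp Vn True w \<phi>) \<and> (\<forall>\<phi>\<in>\<Delta>. \<not> nsat le R Vp Vn True w \<phi>))"

definition ick_model ::
  "('w \<Rightarrow> 'w \<Rightarrow> bool) \<Rightarrow> ('w set \<Rightarrow> 'w \<Rightarrow> 'w \<Rightarrow> bool)
   \<Rightarrow> (nat \<Rightarrow> 'w set) \<Rightarrow> (nat \<Rightarrow> 'w set) \<Rightarrow> bool" where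
  "ick_model le R Vp Vq \<longleftrightarrow>
     (\<forall>w. le w w) \<and> (\<forall>u v w. le u v \<longrightarrow> le v w \<longrightarrow> le u w) \<and>
     (\<forall>i w w'. w \<in> Vp i \<longrightarrow> le w w' \<longrightarrow> w' \<in> Vp i) \<and>
     (\<forall>i w w'. w \<in> Vq i \<longrightarrow> le w w' \<longrightarrow> w' \<in> Vq i) \<and>
     (\<forall>X w w' v. le w w' \<longrightarrow> R X w v \<longrightarrow> (\<exists>v'. le v v' \<and> R X w' v')) \<and>
     (\<forall>X w v v'. R X w v \<longrightarrow> le v v' \<longrightarrow> (\<exists>w'. le w w' \<and> R X w' v'))"

fun isat ::
  "('w \<Rightarrow> 'w \<Rightarrow> bool) \<Rightarrow> ('w set \<Rightarrow> 'w \<Rightarrow> 'w \<Rightarrow> bool)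
   \<Rightarrow> (nat \<Rightarrow> 'w set) \<Rightarrow> (nat \<Rightarrow> 'w set) \<Rightarrow> 'w \<Rightarrow> iform \<Rightarrow> bool" where
  "isat le R Vp Vq w (IP i) = (w \<in> Vp i)"
| "isat le R Vp Vq w (IQ i) = (w \<in> Vq i)"
| "isat le R Vp Vq w (IAnd a b) = (isat le R Vp Vq w a \<and> isat le R Vp Vq w b)"
| "isat le R Vp Vq w (IOr a b) = (isat le R Vp Vq w a \<or> isat le R Vp Vq w b)"
| "isat le R Vp Vq w (IImp a b) =
     (\<forall>v. le w v \<longrightarrow> isat le R Vp Vq v a \<longrightarrow> isat le R Vp Vq v b)"
| "isat le R Vp Vq w (IBox a b) =
     (\<forall>v u. le w v \<longrightarrow> R {x. isat le R Vp Vq x a} v u \<longrightarrow> isat le R Vp Vq u b)"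
| "isat le R Vp Vq w (IDia a b) =
     (\<exists>u. R {x. isat le R Vp Vq x a} w u \<and> isat le R Vp Vq u b)"

definition IntCK :: "'w itself \<Rightarrow> iform set \<Rightarrow> iform set \<Rightarrow> bool" where
  "IntCK _ \<Gamma> \<Delta> \<longleftrightarrow>
     \<not> (\<exists>(le :: 'w \<Rightarrow> 'w \<Rightarrow> bool) R Vp Vq w. ick_model le R Vp Vq \<and>
          (\<forall>\<phi>\<in>\<Gamma>. isat le R Vp Vq w \<phi>) \<and> (\<forall>\<phi>\<in>\<Delta>. \<not> isat le R Vp Vq w \<phi>))"

end

theory Submission
  imports Defs
begin

(* A countermodel can be transported in both directions.  An IntCK^{e+} model becomes an
   N4CK model on the same frame by reading R_(X,Y) as the composite R_X ; R_Y; then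
   verifying phi amounts to satisfying E(phi), and falsifying phi to satisfying E(~phi).
   Conversely, an N4CK model becomes an IntCK^{e+} model by splitting every step
   R_(X,Y)(w,u) into an R_X-step from w to an auxiliary world (w,X), which remembers X,
   followed by an R_Y-step to u.  Both constructions preserve (c1) and (c2), and (c2) is
   exactly what makes the nested box E(phi) []-> (E(~phi) []-> E(psi)) collapse to a single
   box along the composite relation. *)

definition up_closed :: "('w \<Rightarrow> 'w \<Rightarrow> bool) \<Rightarrow> 'w set \<Rightarrow> bool" where
  "up_closed le V \<longleftrightarrow> (\<forall>w w'. w \<in> V \<longrightarrow> le w w' \<longrightarrow> w' \<in> V)"

(* Conditions (c1) and (c2), written relation-algebraically. *)
definition frame_compatible :: "('w \<Rightarrow> 'w \<Rightarrow> bool) \<Rightarrow> ('x \<Rightarrow> 'w \<Rightarrow> 'w \<Rightarrow> bool) \<Rightarrow> bool" where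
  "frame_compatible le R \<longleftrightarrow> (\<forall>X. le\<inverse>\<inverse> OO R X \<le> R X OO le\<inverse>\<inverse> \<and> R X OO le \<le> le OO R X)"

lemma frame_compatible_iff:
  "frame_compatible le R \<longleftrightarrow>
     (\<forall>X w w' v. le w w' \<longrightarrow> R X w v \<longrightarrow> (\<exists>v'. le v v' \<and> R X w' v')) \<and>
     (\<forall>X w v v'. R X w v \<longrightarrow> le v v' \<longrightarrow> (\<exists>w'. le w w' \<and> R X w' v'))"
  unfolding frame_compatible_def le_fun_def relcompp_apply conversep_iff le_bool_def by blast

lemma
  assumes "frame_compatible le R"
  shows frame_compatible_forth: "le w w' \<Longrightarrow> R X w v \<Longrightarrow> \<exists>v'. le v v' \<and> R X w' v'"
    and frame_compatible_back: "R X w v \<Longrightarrow> le v v' \<Longrightarrow> \<exists>w'. le w w' \<and> R X w' v'"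
  using assms unfolding frame_compatible_iff by blast+

lemma n4_model_iff:
  "n4_model le R Vp Vn \<longleftrightarrow> reflp le \<and> transp le \<and> (\<forall>i. up_closed le (Vp i)) \<and>
     (\<forall>i. up_closed le (Vn i)) \<and> frame_compatible le R"
  unfolding n4_model_def frame_compatible_iff up_closed_def reflp_def transp_def by blast

lemma ick_model_iff:
  "ick_model le R Vp Vq \<longleftrightarrow> reflp le \<and> transp le \<and> (\<forall>i. up_closed le (Vp i)) \<and>
     (\<forall>i. up_closed le (Vq i)) \<and> frame_compatible le R"
  unfolding ick_model_def frame_compatible_iff up_closed_def reflp_def transp_def by blast

definition pair_comp :: "('x \<Rightarrow> 'w \<Rightarrow> 'w \<Rightarrow> bool) \<Rightarrow> 'x \<times> 'x \<Rightarrow> 'w \<Rightarrow> 'w \<Rightarrow> bool" where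
  "pair_comp R XY = R (fst XY) OO R (snd XY)"

lemma pair_comp_apply [simp]: "pair_comp R (X, Y) = R X OO R Y"
  by (simp add: pair_comp_def)

lemma frame_compatible_pair_comp:
  fixes R :: "'x \<Rightarrow> 'w \<Rightarrow> 'w \<Rightarrow> bool"
  assumes "frame_compatible le R"
  shows "frame_compatible le (pair_comp R)"
  unfolding frame_compatible_def
proof (intro allI conjI)
  fix XY :: "'x \<times> 'x"
  obtain X Y where XY: "XY = (X, Y)" by (cases XY)
  have c1: "le\<inverse>\<inverse> OO R Z \<le> R Z OO le\<inverse>\<inverse>" and c2: "R Z OO le \<le> le OO R Z" for Z
    using assms by (simp_all add: frame_compatible_def)
  have "le\<inverse>\<inverse> OO (R X OO R Y) = (le\<inverse>\<inverse> OO R X) OO R Y"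
    by (simp add: relcompp_assoc)
  also have "\<dots> \<le> (R X OO le\<inverse>\<inverse>) OO R Y"
    by (intro relcompp_mono c1 order_refl)
  also have "\<dots> = R X OO (le\<inverse>\<inverse> OO R Y)"
    by (simp add: relcompp_assoc)
  also have "\<dots> \<le> R X OO (R Y OO le\<inverse>\<inverse>)"
    by (intro relcompp_mono c1 order_refl)
  finally show "le\<inverse>\<inverse> OO pair_comp R XY \<le> pair_comp R XY OO le\<inverse>\<inverse>"
    by (simp add: XY relcompp_assoc)
  have "(R X OO R Y) OO le = R X OO (R Y OO le)"
    by (simp add: relcompp_assoc)
  also have "\<dots> \<le> R X OO (le OO R Y)"
    by (intro relcompp_mono c2 order_refl)
  also have "\<dots> = (R X OO le) OO R Y"
    by (simp add: relcompp_assoc)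
  also have "\<dots> \<le> (le OO R X) OO R Y"
    by (intro relcompp_mono c2 order_refl)
  finally show "pair_comp R XY OO le \<le> le OO pair_comp R XY"
    by (simp add: XY relcompp_assoc)
qed

lemma box_relcompp_iff:
  assumes "reflp le" "transp le" and c2: "R OO le \<le> le OO R"
  shows "(\<forall>v u. le w v \<longrightarrow> (R OO S) v u \<longrightarrow> P u) \<longleftrightarrow>
         (\<forall>v m. le w v \<longrightarrow> R v m \<longrightarrow> (\<forall>m' u. le m m' \<longrightarrow> S m' u \<longrightarrow> P u))"
proof
  assume box: "\<forall>v u. le w v \<longrightarrow> (R OO S) v u \<longrightarrow> P u"
  show "\<forall>v m. le w v \<longrightarrow> R v m \<longrightarrow> (\<forall>m' u. le m m' \<longrightarrow> S m' u \<longrightarrow> P u)"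
  proof (intro allI impI)
    fix v m m' u
    assume "le w v" "R v m" "le m m'" "S m' u"
    from c2 \<open>R v m\<close> \<open>le m m'\<close> obtain v' where "le v v'" "R v' m'"
      by (auto simp: le_fun_def)
    with \<open>le w v\<close> \<open>S m' u\<close> box \<open>transp le\<close> show "P u"
      by (meson relcomppI transpD)
  qed
qed (use \<open>reflp le\<close> in \<open>auto dest: reflpD\<close>)

lemma ick_model_imp_n4_model_pair_comp:
  "ick_model le R Vp Vq \<Longrightarrow> n4_model le (pair_comp R) Vp Vq"
  by (simp add: ick_model_iff n4_model_iff frame_compatible_pair_comp)

lemma nsat_pair_comp_iff_isat_Etr:
  assumes "ick_model le R Vp Vq"
  shows "(nsat le (pair_comp R) Vp Vq True x \<phi> \<longleftrightarrow> isat le R Vp Vq x (Etr \<phi>)) \<and>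
         (nsat le (pair_comp R) Vp Vq False x \<phi> \<longleftrightarrow> isat le R Vp Vq x (Etrn \<phi>))"
proof (induction \<phi> arbitrary: x)
  case (NBox a b)
  from assms have "reflp le" "transp le" and c2: "R X OO le \<le> le OO R X" for X
    by (simp_all add: ick_model_iff frame_compatible_def)
  then show ?case
    by (simp only: nsat.simps Etr.simps Etrn.simps isat.simps pair_comp_apply NBox.IH
        box_relcompp_iff[OF \<open>reflp le\<close> \<open>transp le\<close> c2]) (auto simp: relcompp_apply)
qed simp_all

(* Inl w is a world of the N4CK model; Inr (w, X) is reached from w by the first half of a
   step whose antecedent has verification set X.  Only the Inl part of a truth set is
   meaningful, hence the preimages Inl -` Z. *)
fun split_le :: "('w \<Rightarrow> 'w \<Rightarrow> bool) \<Rightarrow> 'w + 'w \<times> 'w set \<Rightarrow> 'w + 'w \<times> 'w set \<Rightarrow> bool" where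
  "split_le le (Inl v) (Inl v') \<longleftrightarrow> le v v'"
| "split_le le (Inr (v, X)) (Inr (v', X')) \<longleftrightarrow> le v v' \<and> X = X'"
| "split_le le _ _ \<longleftrightarrow> False"

definition split_R ::
  "('w set \<times> 'w set \<Rightarrow> 'w \<Rightarrow> 'w \<Rightarrow> bool) \<Rightarrow> ('w + 'w \<times> 'w set) set
   \<Rightarrow> 'w + 'w \<times> 'w set \<Rightarrow> 'w + 'w \<times> 'w set \<Rightarrow> bool" where
  "split_R R Z x y \<longleftrightarrow> (case x of
      Inl v \<Rightarrow> y = Inr (v, Inl -` Z)
    | Inr (v, X) \<Rightarrow> (\<exists>u. y = Inl u \<and> R (X, Inl -` Z) v u))"

lemma split_le_Inl_iff: "split_le le (Inl v) y \<longleftrightarrow> (\<exists>v'. y = Inl v' \<and> le v v')"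
  by (cases y) auto

lemma split_le_Inr_iff: "split_le le (Inr (v, X)) y \<longleftrightarrow> (\<exists>v'. y = Inr (v', X) \<and> le v v')"
  by (cases y) auto

lemma split_R_Inl_iff: "split_R R Z (Inl v) y \<longleftrightarrow> y = Inr (v, Inl -` Z)"
  by (simp add: split_R_def)

lemma split_R_Inr_iff: "split_R R Z (Inr (v, X)) y \<longleftrightarrow> (\<exists>u. y = Inl u \<and> R (X, Inl -` Z) v u)"
  by (simp add: split_R_def)

lemmas split_simps = split_le_Inl_iff split_le_Inr_iff split_R_Inl_iff split_R_Inr_iff

lemma Inl_Inr_pair_cases:
  obtains (Inl) v where "x = Inl v" | (Inr) v X where "x = Inr (v, X)"
  by (cases x) auto

lemma reflp_split_le: "reflp le \<Longrightarrow> reflp (split_le le)"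
  unfolding reflp_def
proof
  fix x assume "\<forall>v. le v v"
  then show "split_le le x x" by (cases x) auto
qed

lemma transp_split_le:
  assumes "transp le"
  shows "transp (split_le le)"
proof (rule transpI)
  fix x y z
  assume "split_le le x y" "split_le le y z"
  then show "split_le le x z"
    by (cases x rule: Inl_Inr_pair_cases; fastforce simp: split_simps intro: transpD[OF assms])
qed

lemma up_closed_split_le_image_Inl: "up_closed le V \<Longrightarrow> up_closed (split_le le) (Inl ` V)"
  unfolding up_closed_def by (auto simp: split_le_Inl_iff)

lemma frame_compatible_split:
  assumes "frame_compatible le R"
  shows "frame_compatible (split_le le) (split_R R)"
  unfolding frame_compatible_iff
proof (intro conjI allI impI)
  fix Z x x' y
  assume x: "split_le le x x'" and y: "split_R R Z x y"
  let ?Y = "Inl -` Z"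
  show "\<exists>y'. split_le le y y' \<and> split_R R Z x' y'"
  proof (cases x rule: Inl_Inr_pair_cases)
    case Inl
    with x y show ?thesis by (auto simp: split_simps)
  next
    case (Inr v X)
    with x y obtain v' u where "x' = Inr (v', X)" "le v v'" "y = Inl u" "R (X, ?Y) v u"
      by (auto simp: split_simps)
    moreover from this frame_compatible_forth[OF assms] obtain u' where "le u u'" "R (X, ?Y) v' u'"
      by blast
    ultimately show ?thesis by (auto simp: split_simps)
  qed
next
  fix Z x y y'
  assume y: "split_R R Z x y" and y': "split_le le y y'"
  let ?Y = "Inl -` Z"
  show "\<exists>x'. split_le le x x' \<and> split_R R Z x' y'"
  proof (cases x rule: Inl_Inr_pair_cases)
    case Inl
    with y y' show ?thesis by (auto simp: split_simps)
  next
    case (Inr v X)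
    with y y' obtain u u' where "y = Inl u" "R (X, ?Y) v u" "y' = Inl u'" "le u u'"
      by (auto simp: split_simps)
    moreover from this frame_compatible_back[OF assms] obtain v' where "le v v'" "R (X, ?Y) v' u'"
      by blast
    ultimately show ?thesis using Inr by (auto simp: split_simps)
  qed
qed

lemma n4_model_imp_ick_model_split:
  "n4_model le R Vp Vn \<Longrightarrow>
     ick_model (split_le le) (split_R R) (\<lambda>i. Inl ` Vp i) (\<lambda>i. Inl ` Vn i)"
  by (simp add: n4_model_iff ick_model_iff reflp_split_le transp_split_le
      up_closed_split_le_image_Inl frame_compatible_split)

lemma isat_split_Inl_box_box_iff:
  fixes R :: "'w set \<times> 'w set \<Rightarrow> 'w \<Rightarrow> 'w \<Rightarrow> bool"
    and V1 V2 :: "nat \<Rightarrow> ('w + 'w \<times> 'w set) set"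
  assumes "reflp le" "transp le"
  defines "I \<equiv> isat (split_le le) (split_R R) V1 V2"
  shows "I (Inl x) (IBox \<phi> (IBox \<psi> \<chi>)) \<longleftrightarrow>
    (\<forall>v u. le x v \<longrightarrow> R (Inl -` {z. I z \<phi>}, Inl -` {z. I z \<psi>}) v u \<longrightarrow> I (Inl u) \<chi>)"
    (is "_ \<longleftrightarrow> (\<forall>v u. _ \<longrightarrow> ?R v u \<longrightarrow> _)")
proof
  let ?A = "Inl -` {z. I z \<phi>}"
  assume box: "I (Inl x) (IBox \<phi> (IBox \<psi> \<chi>))"
  show "\<forall>v u. le x v \<longrightarrow> ?R v u \<longrightarrow> I (Inl u) \<chi>"
  proof (intro allI impI)
    fix v u
    assume "le x v" "?R v u"
    with \<open>reflp le\<close> have "split_le le (Inl x) (Inl v)" "split_R R {z. I z \<phi>} (Inl v) (Inr (v, ?A))"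
      "split_le le (Inr (v, ?A)) (Inr (v, ?A))" "split_R R {z. I z \<psi>} (Inr (v, ?A)) (Inl u)"
      by (simp_all add: split_simps reflpD)
    with box show "I (Inl u) \<chi>"
      unfolding I_def isat.simps by blast
  qed
next
  assume box: "\<forall>v u. le x v \<longrightarrow> ?R v u \<longrightarrow> I (Inl u) \<chi>"
  show "I (Inl x) (IBox \<phi> (IBox \<psi> \<chi>))"
    using box transpD[OF \<open>transp le\<close>] by (fastforce simp: I_def split_simps)
qed

lemma isat_split_Inl_dia_dia_iff:
  fixes le :: "'w \<Rightarrow> 'w \<Rightarrow> bool" and R :: "'w set \<times> 'w set \<Rightarrow> 'w \<Rightarrow> 'w \<Rightarrow> bool"
    and V1 V2 :: "nat \<Rightarrow> ('w + 'w \<times> 'w set) set"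
  defines "I \<equiv> isat (split_le le) (split_R R) V1 V2"
  shows "I (Inl x) (IDia \<phi> (IDia \<psi> \<chi>)) \<longleftrightarrow>
    (\<exists>u. R (Inl -` {z. I z \<phi>}, Inl -` {z. I z \<psi>}) x u \<and> I (Inl u) \<chi>)"
  by (auto simp: I_def split_simps)

lemma isat_split_Inl_iff_nsat:
  fixes R :: "'w set \<times> 'w set \<Rightarrow> 'w \<Rightarrow> 'w \<Rightarrow> bool" and Vp Vn :: "nat \<Rightarrow> 'w set"
  assumes "reflp le" "transp le"
  defines "I \<equiv> isat (split_le le) (split_R R) (\<lambda>i. Inl ` Vp i) (\<lambda>i. Inl ` Vn i)"
  shows "(I (Inl x) (Etr \<phi>) \<longleftrightarrow> nsat le R Vp Vn True x \<phi>) \<and>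
         (I (Inl x) (Etrn \<phi>) \<longleftrightarrow> nsat le R Vp Vn False x \<phi>)"
proof (induction \<phi> arbitrary: x)
  case (NImp a b)
  then show ?case by (auto simp: I_def split_le_Inl_iff)
next
  case (NBox a b)
  have "Inl -` {z. I z (Etr a)} = {y. nsat le R Vp Vn True y a}"
    and "Inl -` {z. I z (Etrn a)} = {y. nsat le R Vp Vn False y a}"
    using NBox.IH(1) by auto
  with NBox.IH(2) show ?case
    unfolding I_def by (simp only: Etr.simps Etrn.simps nsat.simps
        isat_split_Inl_box_box_iff[OF assms(1,2)] isat_split_Inl_dia_dia_iff)
qed (auto simp: I_def)

lemma N4CK_imp_IntCK_Etr:
  assumes "N4CK TYPE('w) \<Gamma> \<Delta>"
  shows "IntCK TYPE('w) (Etr ` \<Gamma>) (Etr ` \<Delta>)"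
  unfolding IntCK_def
proof clarify
  fix le :: "'w \<Rightarrow> 'w \<Rightarrow> bool" and R Vp Vq w
  assume M: "ick_model le R Vp Vq"
    and "\<forall>\<phi>\<in>Etr ` \<Gamma>. isat le R Vp Vq w \<phi>" "\<forall>\<phi>\<in>Etr ` \<Delta>. \<not> isat le R Vp Vq w \<phi>"
  then have "\<forall>\<phi>\<in>\<Gamma>. nsat le (pair_comp R) Vp Vq True w \<phi>"
    "\<forall>\<phi>\<in>\<Delta>. \<not> nsat le (pair_comp R) Vp Vq True w \<phi>"
    by (simp_all add: nsat_pair_comp_iff_isat_Etr[OF M])
  with ick_model_imp_n4_model_pair_comp[OF M] assms show False
    unfolding N4CK_def by blast
qed

lemma IntCK_Etr_imp_N4CK:
  assumes "IntCK TYPE('w + 'w \<times> 'w set) (Etr ` \<Gamma>) (Etr ` \<Delta>)"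
  shows "N4CK TYPE('w) \<Gamma> \<Delta>"
  unfolding N4CK_def
proof clarify
  fix le :: "'w \<Rightarrow> 'w \<Rightarrow> bool" and R Vp Vn w
  assume M: "n4_model le R Vp Vn"
    and "\<forall>\<phi>\<in>\<Gamma>. nsat le R Vp Vn True w \<phi>" "\<forall>\<phi>\<in>\<Delta>. \<not> nsat le R Vp Vn True w \<phi>"
  moreover from M have "reflp le" "transp le"
    by (simp_all add: n4_model_iff)
  ultimately have
    "\<forall>\<phi>\<in>Etr ` \<Gamma>. isat (split_le le) (split_R R) (\<lambda>i. Inl ` Vp i) (\<lambda>i. Inl ` Vn i) (Inl w) \<phi>"
    "\<forall>\<phi>\<in>Etr ` \<Delta>. \<not> isat (split_le le) (split_R R) (\<lambda>i. Inl ` Vp i) (\<lambda>i. Inl ` Vn i) (Inl w) \<phi>"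
    by (simp_all add: isat_split_Inl_iff_nsat)
  with n4_model_imp_ick_model_split[OF M] assms show False
    unfolding IntCK_def by blast
qed

theorem proposition9:
  fixes \<Gamma> \<Delta> :: "nform set"
  shows "(N4CK TYPE('w) \<Gamma> \<Delta> \<longrightarrow> IntCK TYPE('w) (Etr ` \<Gamma>) (Etr ` \<Delta>)) \<and>
         (IntCK TYPE('w + 'w \<times> 'w set) (Etr ` \<Gamma>) (Etr ` \<Delta>) \<longrightarrow> N4CK TYPE('w) \<Gamma> \<Delta>)"
  using N4CK_imp_IntCK_Etr IntCK_Etr_imp_N4CK by blast

end
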